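(* A family of structures $\mathfrak{K}$ is $\mathbf{PL}$-learnable if and only if $\mathfrak{K}$ is a $\Sigma^{\mathrm{inf}}_2$-antichain, i.e., for any two distinct $\mathcal{A},\mathcal{B}\in\mathfrak{K}$ there are $\Sigma^{\mathrm{inf}}_2$ sentences $\varphi,\psi$ with $\mathcal{A}\models\varphi$, $\mathcal{B}\not\models\varphi$, $\mathcal{B}\models\psi$, $\mathcal{A}\not\models\psi$.
   Context: All structures are countable, have domain $\mathbb{N}$, are in a finite relational signature, and are identified with their atomic diagrams. A family of structures $\mathfrak{K}$ is a countable set of pairwise nonisomorphic such structures. $\mathcal{S}\restriction_s$ is the finite substructure of $\mathcal{S}$ on $\{0,\dots,s\}$. $\mathrm{LD}(\mathfrak{K})$ is the set of structures with domain $\mathbb{N}$ isomorphic to a member of $\mathfrak{K}$. The hypothesis space is $\{\ulcorner\mathcal{A}\urcorner:\mathcal{A}\in\mathfrak{K}\}\cup\{?\}$; a learner is an arbitrary function $\mathbf{M}$ from $\{\mathcal{S}\restriction_s:\mathcal{S}\in\mathrm{LD}(\mathfrak{K})\}$ to the hypothesis space. $\mathfrak{K}$ is $\mathbf{PL}$-learnable (partially learnable) if there is a learner $\mathbf{M}$ such that for every $\mathcal{S}\in\mathrm{LD}(\mathfrak{K})$ and every $\mathcal{A}\in\mathfrak{K}$: the set $\{n:\mathbf{M}(\mathcal{S}\restriction_n)=\ulcorner\mathcal{A}\urcorner\}$ is infinite iff $\mathcal{A}\cong\mathcal{S}$ (the symbol $?$ may be output infinitely often). Infinitary logic $\mathcal{L}_{\omega_1\omega}$: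 $\Sigma^{\mathrm{inf}}_0=\Pi^{\mathrm{inf}}_0$ formulas are finitary quantifier-free; a $\Sigma^{\mathrm{inf}}_\alpha$ formula is a countable disjunction $\bigvee_i\exists\bar y_i\,\psi_i$ with $\psi_i\in\Pi^{\mathrm{inf}}_{\beta_i}$, $\beta_i<\alpha$; a $\Pi^{\mathrm{inf}}_\alpha$ formula is a countable conjunction $\bigwedge_i\forall\bar y_i\,\psi_i$ with $\psi_i\in\Sigma^{\mathrm{inf}}_{\beta_i}$, $\beta_i<\alpha$ (free variables among a fixed finite tuple). *)

theory Defs
  imports Main "HOL-Library.Countable_Set"
begin

text \<open>A finite relational signature is a list of arities: relation symbol r (r < length sig)
  has arity sig ! r. A structure with domain nat is identified with its atomic diagram,
  i.e. a predicate on (relation symbol, tuple), which is false outside the signature.\<close>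

type_synonym str = "nat \<Rightarrow> nat list \<Rightarrow> bool"

definition wf_str :: "nat list \<Rightarrow> str \<Rightarrow> bool" where
  "wf_str sig S \<longleftrightarrow> (\<forall>r xs. S r xs \<longrightarrow> r < length sig \<and> length xs = sig ! r)"

definition iso :: "str \<Rightarrow> str \<Rightarrow> bool" where
  "iso A B \<longleftrightarrow> (\<exists>f. bij f \<and> (\<forall>r xs. A r xs \<longleftrightarrow> B r (map f xs)))"

definition family :: "nat list \<Rightarrow> str set \<Rightarrow> bool" where
  "family sig K \<longleftrightarrow> countable K \<and> (\<forall>A\<in>K. wf_str sig A)
     \<and> (\<forall>A\<in>K. \<forall>B\<in>K. A \<noteq> B \<longrightarrow> \<not> iso A B)"

definition LD :: "nat list \<Rightarrow> str set \<Rightarrow> str set" where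
  "LD sig K = {S. wf_str sig S \<and> (\<exists>A\<in>K. iso A S)}"

definition restr :: "str \<Rightarrow> nat \<Rightarrow> nat \<times> str" where
  "restr S s = (s, \<lambda>r xs. S r xs \<and> set xs \<subseteq> {0..s})"

text \<open>Learners: hypotheses are codes of members of K (Some A) or ? (None).\<close>
definition PL_learnable :: "nat list \<Rightarrow> str set \<Rightarrow> bool" where
  "PL_learnable sig K \<longleftrightarrow>
    (\<exists>M :: nat \<times> str \<Rightarrow> str option.
       (\<forall>S\<in>LD sig K. \<forall>n. M (restr S n) \<in> insert None (Some ` K)) \<and>
       (\<forall>S\<in>LD sig K. \<forall>A\<in>K. infinite {n. M (restr S n) = Some A} \<longleftrightarrow> iso A S))"

datatype qf = QAtom nat "nat list" | QEq nat nat | QNeg qf | QAnd qf qf | QOr qf qf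

text \<open>BigOr I ys psi is the countable disjunction over i in I of (exists ys i. psi i);
  BigAnd I ys psi is the countable conjunction over i in I of (forall ys i. psi i).\<close>
datatype form = QF qf
  | BigOr "nat set" "nat \<Rightarrow> nat list" "nat \<Rightarrow> form"
  | BigAnd "nat set" "nat \<Rightarrow> nat list" "nat \<Rightarrow> form"

fun sat_qf :: "str \<Rightarrow> (nat \<Rightarrow> nat) \<Rightarrow> qf \<Rightarrow> bool" where
  "sat_qf S v (QAtom r xs) = S r (map v xs)"
| "sat_qf S v (QEq a b) = (v a = v b)"
| "sat_qf S v (QNeg p) = (\<not> sat_qf S v p)"
| "sat_qf S v (QAnd p q) = (sat_qf S v p \<and> sat_qf S v q)"
| "sat_qf S v (QOr p q) = (sat_qf S v p \<or> sat_qf S v q)"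

primrec sat :: "str \<Rightarrow> (nat \<Rightarrow> nat) \<Rightarrow> form \<Rightarrow> bool" where
  "sat S v (QF q) = sat_qf S v q"
| "sat S v (BigOr I ys \<psi>) =
     (\<exists>i\<in>I. \<exists>w. (\<forall>x. x \<notin> set (ys i) \<longrightarrow> w x = v x) \<and> sat S w (\<psi> i))"
| "sat S v (BigAnd I ys \<psi>) =
     (\<forall>i\<in>I. \<forall>w. (\<forall>x. x \<notin> set (ys i) \<longrightarrow> w x = v x) \<longrightarrow> sat S w (\<psi> i))"

fun fv_qf :: "qf \<Rightarrow> nat set" where
  "fv_qf (QAtom r xs) = set xs"
| "fv_qf (QEq a b) = {a, b}"
| "fv_qf (QNeg p) = fv_qf p"
| "fv_qf (QAnd p q) = fv_qf p \<union> fv_qf q"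
| "fv_qf (QOr p q) = fv_qf p \<union> fv_qf q"

primrec fv :: "form \<Rightarrow> nat set" where
  "fv (QF q) = fv_qf q"
| "fv (BigOr I ys \<psi>) = (\<Union>i\<in>I. fv (\<psi> i) - set (ys i))"
| "fv (BigAnd I ys \<psi>) = (\<Union>i\<in>I. fv (\<psi> i) - set (ys i))"

definition sentence :: "form \<Rightarrow> bool" where
  "sentence \<phi> \<longleftrightarrow> fv \<phi> = {}"

definition models :: "str \<Rightarrow> form \<Rightarrow> bool" where
  "models S \<phi> \<longleftrightarrow> sat S (\<lambda>_. 0) \<phi>"

inductive SigmaInf :: "nat \<Rightarrow> form \<Rightarrow> bool" and PiInf :: "nat \<Rightarrow> form \<Rightarrow> bool" where
  sig0: "SigmaInf 0 (QF q)"
| pi0: "PiInf 0 (QF q)"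
| sigS: "0 < \<alpha> \<Longrightarrow> (\<forall>i\<in>I. \<exists>\<beta><\<alpha>. PiInf \<beta> (\<psi> i)) \<Longrightarrow> SigmaInf \<alpha> (BigOr I ys \<psi>)"
| piS: "0 < \<alpha> \<Longrightarrow> (\<forall>i\<in>I. \<exists>\<beta><\<alpha>. SigmaInf \<beta> (\<psi> i)) \<Longrightarrow> PiInf \<alpha> (BigAnd I ys \<psi>)"

definition Sigma2_antichain :: "str set \<Rightarrow> bool" where
  "Sigma2_antichain K \<longleftrightarrow> (\<forall>A\<in>K. \<forall>B\<in>K. A \<noteq> B \<longrightarrow>
     (\<exists>\<phi> \<psi>. sentence \<phi> \<and> SigmaInf 2 \<phi> \<and> sentence \<psi> \<and> SigmaInf 2 \<psi> \<and>
        models A \<phi> \<and> \<not> models B \<phi> \<and> models B \<psi> \<and> \<not> models A \<psi>))"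

end

theory Submission
  imports Defs "HOL-Library.Sublist"
begin

text \<open>
  (\<Leftarrow>) Choose, for distinct members A and B, a \<open>\<Sigma>\<^sub>2\<close> sentence true in A and false in B.
  A \<open>\<Sigma>\<^sub>2\<close> sentence \<open>\<Or>\<^sub>i \<exists>y. \<pi>\<^sub>i\<close> with \<open>\<Pi>\<^sub>1\<close> matrices can be watched on the finite parts of a
  structure: the least size of a disjunct together with a witness tuple that has not yet been
  refuted stays bounded if the sentence holds and tends to infinity otherwise. Hence, on a copy of
  k, the sentence separating k from B eventually looks better than the one separating B from k.
  The learner devotes stage \<open>\<langle>a, t\<rangle>\<close> to the a-th member A and guesses A when A looks better
  than its first N rivals, N being the number of earlier successes of A; the true member succeeds
  infinitely often, every other member only finitely often.

  (\<Rightarrow>) Suppose every \<open>\<Sigma>\<^sub>2\<close> sentence true in A is true in B. For a tuple a of A, the existential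
  closure of the universal type of a is \<open>\<Sigma>\<^sub>2\<close>, so B has a tuple b every existential property of
  which holds of a in A. Some copy of B beginning with b makes the learner guess B at a stage t;
  the diagram of that copy up to t is an existential property of b, so it is realised in A above a.
  Iterating, while inserting every number along the way, yields a copy of A on which the learner
  guesses B infinitely often, so A and B are isomorphic.
\<close>

definition relabel :: "(nat \<Rightarrow> nat) \<Rightarrow> str \<Rightarrow> str" where
  "relabel g S = (\<lambda>r xs. S r (map g xs))"

lemma relabel_relabel: "relabel f (relabel g S) = relabel (g \<circ> f) S"
  by (simp add: relabel_def)

lemma relabel_id: "relabel id S = S"
  by (simp add: relabel_def)

lemma wf_str_relabel: "wf_str sig S \<Longrightarrow> wf_str sig (relabel g S)"
  unfolding wf_str_def relabel_def by (metis length_map)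

lemma iso_iff_relabel: "iso A B \<longleftrightarrow> (\<exists>f. bij f \<and> A = relabel f B)"
  by (simp add: iso_def relabel_def fun_eq_iff)

lemma iso_relabel: "bij g \<Longrightarrow> iso (relabel g S) S"
  by (auto simp: iso_iff_relabel)

lemma iso_sym: "iso A B \<Longrightarrow> iso B A"
proof -
  assume "iso A B"
  then obtain f where f: "bij f" and A: "A = relabel f B"
    by (auto simp: iso_iff_relabel)
  have "relabel (inv f) A = B"
    using f by (simp add: A relabel_relabel bij_is_surj[OF f, unfolded surj_iff] relabel_id)
  then show "iso B A"
    unfolding iso_iff_relabel using bij_imp_bij_inv[OF f] by blast
qed

lemma iso_trans:
  assumes "iso A B" and "iso B C"
  shows "iso A C"
proof -
  obtain f where "bij f" "A = relabel f B"
    using assms(1) iso_iff_relabel by blast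
  moreover obtain g where "bij g" "B = relabel g C"
    using assms(2) iso_iff_relabel by blast
  ultimately show ?thesis
    unfolding iso_iff_relabel by (metis bij_comp relabel_relabel)
qed

lemma sat_qf_relabel: "inj f \<Longrightarrow> sat_qf (relabel f S) v q \<longleftrightarrow> sat_qf S (f \<circ> v) q"
  by (induction q) (auto simp: relabel_def inj_eq)

lemma ex_agree_off_comp_bij:
  assumes "bij f"
  shows "(\<exists>w. (\<forall>x. x \<notin> Y \<longrightarrow> w x = v x) \<and> P (\<lambda>x. f (w x))) \<longleftrightarrow>
         (\<exists>w. (\<forall>x. x \<notin> Y \<longrightarrow> w x = f (v x)) \<and> P w)"
proof
  assume "\<exists>w. (\<forall>x. x \<notin> Y \<longrightarrow> w x = f (v x)) \<and> P w"
  then obtain w where w: "\<forall>x. x \<notin> Y \<longrightarrow> w x = f (v x)" "P w" by blast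
  have "(\<lambda>x. f (inv f (w x))) = w"
    using assms by (simp add: fun_eq_iff bij_is_surj surj_f_inv_f)
  moreover have "\<forall>x. x \<notin> Y \<longrightarrow> inv f (w x) = v x"
    using w(1) assms by (simp add: bij_is_inj)
  ultimately show "\<exists>w. (\<forall>x. x \<notin> Y \<longrightarrow> w x = v x) \<and> P (\<lambda>x. f (w x))"
    using w(2) by (intro exI[of _ "\<lambda>x. inv f (w x)"]) simp
next
  assume "\<exists>w. (\<forall>x. x \<notin> Y \<longrightarrow> w x = v x) \<and> P (\<lambda>x. f (w x))"
  then obtain w where "\<forall>x. x \<notin> Y \<longrightarrow> w x = v x" "P (\<lambda>x. f (w x))" by blast
  then show "\<exists>w. (\<forall>x. x \<notin> Y \<longrightarrow> w x = f (v x)) \<and> P w"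
    by (intro exI[of _ "\<lambda>x. f (w x)"]) simp
qed

lemma sat_relabel:
  assumes "bij f"
  shows "sat (relabel f S) v \<phi> \<longleftrightarrow> sat S (f \<circ> v) \<phi>"
proof (induction \<phi> arbitrary: v)
  case (QF q)
  show ?case by (simp add: sat_qf_relabel[OF bij_is_inj[OF assms]] comp_def)
next
  case (BigOr I ys \<psi>)
  have "(\<exists>w. (\<forall>x. x \<notin> set (ys i) \<longrightarrow> w x = v x) \<and> sat S (\<lambda>x. f (w x)) (\<psi> i)) \<longleftrightarrow>
        (\<exists>w. (\<forall>x. x \<notin> set (ys i) \<longrightarrow> w x = f (v x)) \<and> sat S w (\<psi> i))" for i
    using ex_agree_off_comp_bij[OF assms, of "set (ys i)" v "\<lambda>w. sat S w (\<psi> i)"]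
    by simp
  then show ?case by (simp add: BigOr.IH[OF rangeI])
next
  case (BigAnd I ys \<psi>)
  have "(\<exists>w. (\<forall>x. x \<notin> set (ys i) \<longrightarrow> w x = v x) \<and> \<not> sat S (\<lambda>x. f (w x)) (\<psi> i)) \<longleftrightarrow>
        (\<exists>w. (\<forall>x. x \<notin> set (ys i) \<longrightarrow> w x = f (v x)) \<and> \<not> sat S w (\<psi> i))" for i
    using ex_agree_off_comp_bij[OF assms, of "set (ys i)" v "\<lambda>w. \<not> sat S w (\<psi> i)"]
    by simp
  then show ?case by (simp add: BigAnd.IH[OF rangeI]) blast
qed

lemma ex_agree_off_cong:
  assumes "\<forall>x\<in>F - Y. v x = v' x" and "\<And>w w'. \<forall>x\<in>F. w x = w' x \<Longrightarrow> P w \<longleftrightarrow> P w'"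
  shows "(\<exists>w. (\<forall>x. x \<notin> Y \<longrightarrow> w x = v x) \<and> P w) \<longleftrightarrow> (\<exists>w. (\<forall>x. x \<notin> Y \<longrightarrow> w x = v' x) \<and> P w)"
proof -
  have transfer: "\<exists>w'. (\<forall>x. x \<notin> Y \<longrightarrow> w' x = u' x) \<and> P w'"
    if "\<forall>x\<in>F - Y. u x = u' x" and "\<forall>x. x \<notin> Y \<longrightarrow> w x = u x" and "P w" for u u' w
  proof (intro exI conjI)
    let ?w = "\<lambda>x. if x \<in> Y then w x else u' x"
    show "\<forall>x. x \<notin> Y \<longrightarrow> ?w x = u' x" by simp
    have "P w \<longleftrightarrow> P ?w" using that(1,2) by (intro assms(2)) auto
    with that(3) show "P ?w" by simp
  qed
  have "\<forall>x\<in>F - Y. v' x = v x" using assms(1) by simp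
  then show ?thesis using transfer[OF assms(1)] transfer by blast
qed

lemma sat_fv_cong: "\<forall>x\<in>fv \<phi>. v x = v' x \<Longrightarrow> sat S v \<phi> \<longleftrightarrow> sat S v' \<phi>"
proof (induction \<phi> arbitrary: v v')
  case (QF q)
  then show ?case
  proof (induction q)
    case (QAtom r xs)
    then show ?case by (simp cong: map_cong)
  qed auto
next
  case (BigOr I ys \<psi>)
  have "(\<exists>w. (\<forall>x. x \<notin> set (ys i) \<longrightarrow> w x = v x) \<and> sat S w (\<psi> i)) \<longleftrightarrow>
        (\<exists>w. (\<forall>x. x \<notin> set (ys i) \<longrightarrow> w x = v' x) \<and> sat S w (\<psi> i))" if "i \<in> I" for i
  proof (rule ex_agree_off_cong[where F = "fv (\<psi> i)"])
    show "\<forall>x\<in>fv (\<psi> i) - set (ys i). v x = v' x" using BigOr.prems that by auto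
  qed (rule BigOr.IH[OF rangeI])
  then show ?case by auto
next
  case (BigAnd I ys \<psi>)
  have "(\<forall>w. (\<forall>x. x \<notin> set (ys i) \<longrightarrow> w x = v x) \<longrightarrow> sat S w (\<psi> i)) \<longleftrightarrow>
        (\<forall>w. (\<forall>x. x \<notin> set (ys i) \<longrightarrow> w x = v' x) \<longrightarrow> sat S w (\<psi> i))" if "i \<in> I" for i
  proof -
    have "(\<exists>w. (\<forall>x. x \<notin> set (ys i) \<longrightarrow> w x = v x) \<and> \<not> sat S w (\<psi> i)) \<longleftrightarrow>
          (\<exists>w. (\<forall>x. x \<notin> set (ys i) \<longrightarrow> w x = v' x) \<and> \<not> sat S w (\<psi> i))"
    proof (rule ex_agree_off_cong[where F = "fv (\<psi> i)"])
      show "\<forall>x\<in>fv (\<psi> i) - set (ys i). v x = v' x" using BigAnd.prems that by auto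
    qed (rule arg_cong[where f = Not], rule BigAnd.IH[OF rangeI])
    then show ?thesis by blast
  qed
  then show ?case by simp
qed

lemma models_iso:
  assumes "iso A B" and "sentence \<phi>"
  shows "models A \<phi> \<longleftrightarrow> models B \<phi>"
proof -
  obtain f where "bij f" and A: "A = relabel f B"
    using assms(1) by (auto simp: iso_iff_relabel)
  then have "models A \<phi> \<longleftrightarrow> sat B (\<lambda>_. f 0) \<phi>"
    by (simp add: models_def sat_relabel comp_def)
  also have "\<dots> \<longleftrightarrow> models B \<phi>"
    using assms(2) sat_fv_cong[of \<phi> "\<lambda>_. f 0" "\<lambda>_. 0"] by (simp add: models_def sentence_def)
  finally show ?thesis .
qed

section \<open>Watching \<open>\<Sigma>\<^sub>2\<close> sentences on finite parts\<close>

definition trunc :: "str \<Rightarrow> nat \<Rightarrow> str" where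
  "trunc S s = (\<lambda>r xs. S r xs \<and> set xs \<subseteq> {0..s})"

lemma restr_eq_trunc: "restr S s = (s, trunc S s)"
  by (simp add: restr_def trunc_def)

lemma restr_cong: "(\<And>r xs. set xs \<subseteq> {0..t} \<Longrightarrow> S r xs = T r xs) \<Longrightarrow> restr S t = restr T t"
  by (auto simp: restr_def fun_eq_iff)

lemma trunc_trunc: "s' \<le> s \<Longrightarrow> trunc (trunc S s) s' = trunc S s'"
  by (auto simp: trunc_def fun_eq_iff)

lemma sat_qf_trunc: "\<forall>x. w x \<le> s \<Longrightarrow> sat_qf (trunc S s) w q \<longleftrightarrow> sat_qf S w q"
  by (induction q) (auto simp: trunc_def)

definition Pi1_normal :: "form \<Rightarrow> bool" where
  "Pi1_normal \<chi> \<longleftrightarrow> (\<exists>q. \<chi> = QF q) \<or> (\<exists>I zs \<theta>. \<chi> = BigAnd I zs \<theta> \<and> (\<forall>l\<in>I. \<exists>q. \<theta> l = QF q))"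

lemma PiInf_Pi1_normal:
  assumes "PiInf \<beta> \<chi>" and "\<beta> < 2"
  shows "Pi1_normal \<chi>"
  using assms(1)
proof (cases rule: PiInf.cases)
  case pi0
  then show ?thesis by (auto simp: Pi1_normal_def)
next
  case (piS I \<psi> ys)
  have "\<exists>q. \<psi> i = QF q" if i: "i \<in> I" for i
  proof -
    obtain \<gamma> where "\<gamma> < \<beta>" and "SigmaInf \<gamma> (\<psi> i)"
      using piS(3) i by blast
    moreover have "\<gamma> = 0" using \<open>\<gamma> < \<beta>\<close> assms(2) by simp
    ultimately have "SigmaInf 0 (\<psi> i)" by simp
    then show ?thesis by (cases rule: SigmaInf.cases) auto
  qed
  with piS(1) show ?thesis by (auto simp: Pi1_normal_def)
qed

lemma SigmaInf_2_normal:
  assumes "SigmaInf 2 \<phi>"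
  shows "\<exists>I ys \<psi>. \<phi> = BigOr I ys \<psi> \<and> (\<forall>i\<in>I. Pi1_normal (\<psi> i))"
  using assms
proof (cases rule: SigmaInf.cases)
  case (sigS I \<psi> ys)
  have "Pi1_normal (\<psi> i)" if "i \<in> I" for i
    using sigS(3) that PiInf_Pi1_normal by force
  with sigS(1) show ?thesis by blast
qed simp

definition refutes :: "str \<Rightarrow> nat \<Rightarrow> form \<Rightarrow> (nat \<Rightarrow> nat) \<Rightarrow> bool" where
  "refutes D s \<chi> w = (case \<chi> of
       QF q \<Rightarrow> (\<forall>x. w x \<le> s) \<and> \<not> sat_qf D w q
     | BigAnd I zs \<theta> \<Rightarrow> (\<exists>l\<in>I. \<exists>w'. (\<forall>x. x \<notin> set (zs l) \<longrightarrow> w' x = w x) \<and> (\<forall>x. w' x \<le> s) \<and>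
                                     \<not> sat D w' (\<theta> l))
     | BigOr _ _ _ \<Rightarrow> False)"

lemma not_refutes_trunc:
  assumes "Pi1_normal \<chi>" and "sat S w \<chi>"
  shows "\<not> refutes (trunc S s) s \<chi> w"
  using assms sat_qf_trunc unfolding Pi1_normal_def refutes_def
  by (auto; metis sat.simps(1))

lemma bounded_if_agree_off_finite:
  fixes w v :: "nat \<Rightarrow> nat"
  assumes "finite Y" and "\<forall>x. x \<notin> Y \<longrightarrow> w x = v x" and "\<forall>x. v x \<le> n"
  shows "\<forall>x. w x \<le> n + sum w Y"
proof
  fix x
  show "w x \<le> n + sum w Y"
    using assms member_le_sum[of x Y w] by (cases "x \<in> Y") (auto simp: trans_le_add1 trans_le_add2)
qed

lemma eventually_refutes_trunc:
  assumes "Pi1_normal \<chi>" and "\<not> sat S w \<chi>" and "\<forall>x. w x \<le> n"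
  shows "\<forall>\<^sub>F s in sequentially. refutes (trunc S s) s \<chi> w"
  using assms(1) unfolding Pi1_normal_def
proof (elim disjE exE conjE)
  fix q
  assume \<chi>: "\<chi> = QF q"
  show ?thesis
    using eventually_ge_at_top[of n]
  proof (rule eventually_mono)
    fix s
    assume "n \<le> s"
    then have "\<forall>x. w x \<le> s" using assms(3) le_trans by blast
    then show "refutes (trunc S s) s \<chi> w"
      using assms(2) sat_qf_trunc[of w s S q] by (simp add: \<chi> refutes_def)
  qed
next
  fix I zs \<theta>
  assume \<chi>: "\<chi> = BigAnd I zs \<theta>" and qf: "\<forall>l\<in>I. \<exists>q. \<theta> l = QF q"
  obtain l w' where l: "l \<in> I" and w': "\<forall>x. x \<notin> set (zs l) \<longrightarrow> w' x = w x" and "\<not> sat S w' (\<theta> l)"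
    using assms(2) \<chi> by auto
  moreover obtain q where q: "\<theta> l = QF q" using qf l by blast
  ultimately have fails: "\<not> sat_qf S w' q" by simp
  define m where "m = n + sum w' (set (zs l))"
  have bounded: "\<forall>x. w' x \<le> m"
    unfolding m_def using assms(3) w' by (intro bounded_if_agree_off_finite) auto
  show ?thesis
    using eventually_ge_at_top[of m]
  proof (rule eventually_mono)
    fix s
    assume "m \<le> s"
    then have "\<forall>x. w' x \<le> s" using bounded le_trans by blast
    then show "refutes (trunc S s) s \<chi> w"
      using fails sat_qf_trunc[of w' s S q] l w' unfolding \<chi> refutes_def
      by (auto simp: q intro!: bexI[of _ l] exI[of _ w'])
  qed
qed

definition survives :: "str \<Rightarrow> nat \<Rightarrow> form \<Rightarrow> nat \<Rightarrow> bool" where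
  "survives D s \<phi> n = (case \<phi> of
       BigOr I ys \<psi> \<Rightarrow> \<exists>i w. i \<in> I \<and> i \<le> n \<and> (\<forall>x. x \<notin> set (ys i) \<longrightarrow> w x = 0) \<and> (\<forall>x. w x \<le> n) \<and>
                           \<not> refutes D s (\<psi> i) w
     | _ \<Rightarrow> False)"

definition level :: "str \<Rightarrow> nat \<Rightarrow> form \<Rightarrow> nat" where
  "level D s \<phi> = (LEAST n. n = s \<or> survives D s \<phi> n)"

lemma level_le: "survives D s \<phi> n \<Longrightarrow> level D s \<phi> \<le> n"
  unfolding level_def by (rule Least_le) simp

lemma less_level:
  assumes "n < s" and "\<forall>m\<le>n. \<not> survives D s \<phi> m"
  shows "n < level D s \<phi>"
proof -
  have "level D s \<phi> = s \<or> survives D s \<phi> (level D s \<phi>)"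
    unfolding level_def by (rule LeastI[of _ s]) simp
  then show ?thesis
    using assms by (elim disjE) (auto simp: not_le)
qed

lemma level_bounded_if_models:
  assumes "SigmaInf 2 \<phi>" and "models S \<phi>"
  shows "\<exists>L. \<forall>s. level (trunc S s) s \<phi> \<le> L"
proof -
  obtain I ys \<psi> where \<phi>: "\<phi> = BigOr I ys \<psi>" and normal: "\<forall>i\<in>I. Pi1_normal (\<psi> i)"
    using SigmaInf_2_normal[OF assms(1)] by blast
  obtain i w where i: "i \<in> I" and w: "\<forall>x. x \<notin> set (ys i) \<longrightarrow> w x = 0" and "sat S w (\<psi> i)"
    using assms(2) by (auto simp: models_def \<phi>)
  then have not_refuted: "\<not> refutes (trunc S s) s (\<psi> i) w" for s
    using normal not_refutes_trunc by blast
  define L where "L = i + sum w (set (ys i))"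
  have "\<forall>x. w x \<le> sum w (set (ys i))"
    using bounded_if_agree_off_finite[of "set (ys i)" w "\<lambda>_. 0" 0] w by simp
  then have "\<forall>x. w x \<le> L"
    unfolding L_def using trans_le_add2 by blast
  then have "survives (trunc S s) s \<phi> L" for s
    unfolding survives_def \<phi> using i w not_refuted by (auto simp: L_def intro!: exI[of _ i] exI[of _ w])
  then show ?thesis using level_le by blast
qed

lemma finite_bounded_candidates:
  "finite {(i, w :: nat \<Rightarrow> nat). i \<le> n \<and> (\<forall>x. x \<notin> ys i \<longrightarrow> w x = 0) \<and> (\<forall>x. w x \<le> n)}"
  if "\<forall>i. finite (ys i)"
proof -
  define F where "F = (\<Union>i\<le>n. ys i)"
  have "finite F" unfolding F_def using that by blast
  then have "finite {w :: nat \<Rightarrow> nat. \<forall>x. (x \<in> F \<longrightarrow> w x \<in> {..n}) \<and> (x \<notin> F \<longrightarrow> w x = 0)}"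
    by (intro finite_set_of_finite_funs) auto
  then have "finite ({..n} \<times> {w. \<forall>x. (x \<in> F \<longrightarrow> w x \<in> {..n}) \<and> (x \<notin> F \<longrightarrow> w x = 0)})"
    by blast
  then show ?thesis
    by (rule finite_subset[rotated]) (auto simp: F_def)
qed

lemma eventually_less_level_if_not_models:
  assumes "SigmaInf 2 \<phi>" and "\<not> models S \<phi>"
  shows "\<forall>\<^sub>F s in sequentially. n < level (trunc S s) s \<phi>"
proof -
  obtain I ys \<psi> where \<phi>: "\<phi> = BigOr I ys \<psi>" and normal: "\<forall>i\<in>I. Pi1_normal (\<psi> i)"
    using SigmaInf_2_normal[OF assms(1)] by blast
  define C where "C = {(i, w). i \<in> I \<and> i \<le> n \<and> (\<forall>x. x \<notin> set (ys i) \<longrightarrow> w x = 0) \<and> (\<forall>x. w x \<le> n)}"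
  have "finite C"
    using finite_bounded_candidates[of "\<lambda>i. set (ys i)" n]
    by (rule finite_subset[rotated]) (auto simp: C_def)
  moreover have "\<forall>\<^sub>F s in sequentially. refutes (trunc S s) s (\<psi> (fst c)) (snd c)" if "c \<in> C" for c
  proof (rule eventually_refutes_trunc)
    show "\<not> sat S (snd c) (\<psi> (fst c))"
    proof
      assume "sat S (snd c) (\<psi> (fst c))"
      with that have "models S \<phi>"
        unfolding models_def \<phi> by (auto simp: C_def intro!: bexI[of _ "fst c"] exI[of _ "snd c"])
      with assms(2) show False ..
    qed
  qed (use that normal in \<open>auto simp: C_def\<close>)
  ultimately have "\<forall>\<^sub>F s in sequentially. \<forall>c\<in>C. refutes (trunc S s) s (\<psi> (fst c)) (snd c)"
    by (rule eventually_ball_finite[OF _ ballI])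
  then show ?thesis
    using eventually_gt_at_top[of n]
  proof eventually_elim
    case (elim s)
    have "\<not> survives (trunc S s) s \<phi> m" if "m \<le> n" for m
    proof
      assume "survives (trunc S s) s \<phi> m"
      then obtain i w where "i \<in> I" "i \<le> m" "\<forall>x. x \<notin> set (ys i) \<longrightarrow> w x = 0" "\<forall>x. w x \<le> m"
        and not_refuted: "\<not> refutes (trunc S s) s (\<psi> i) w"
        unfolding survives_def \<phi> by auto
      with \<open>m \<le> n\<close> have "(i, w) \<in> C"
        unfolding C_def by (auto intro: le_trans)
      with elim(1) not_refuted show False by fastforce
    qed
    with elim(2) show ?case by (intro less_level) auto
  qed
qed

section \<open>A learner for \<open>\<Sigma>\<^sub>2\<close>-antichains\<close>

primrec success_count :: "(nat \<Rightarrow> nat \<Rightarrow> bool) \<Rightarrow> nat \<Rightarrow> nat" where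
  "success_count W 0 = 0"
| "success_count W (Suc s) = success_count W s + (if W (success_count W s) s then 1 else 0)"

lemma success_count_cong:
  "(\<And>N s'. s' < s \<Longrightarrow> W N s' = W' N s') \<Longrightarrow> success_count W s = success_count W' s"
  by (induction s) auto

lemma success_count_mono: "s \<le> s' \<Longrightarrow> success_count W s \<le> success_count W s'"
  by (induction s' rule: dec_induct) auto

lemma success_count_unbounded:
  assumes "infinite {s. W (success_count W s) s}"
  shows "\<exists>s. N \<le> success_count W s"
proof (induction N)
  case (Suc N)
  then obtain s where "N \<le> success_count W s" by blast
  moreover obtain s' where "s \<le> s'" and "W (success_count W s') s'"
    using assms unfolding infinite_nat_iff_unbounded_le by blast
  ultimately have "Suc N \<le> success_count W (Suc s')"
    using success_count_mono[of s s' W] by auto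
  then show ?case by blast
qed simp

lemma infinite_successes:
  assumes "\<And>N. \<forall>\<^sub>F s in sequentially. G s \<longrightarrow> W N s" and "infinite {s. G s}"
  shows "infinite {s. W (success_count W s) s}"
proof
  assume "finite {s. W (success_count W s) s}"
  then obtain m where "\<forall>s\<in>{s. W (success_count W s) s}. s < m"
    using finite_nat_set_iff_bounded by blast
  then have no_success: "\<not> W (success_count W s) s" if "m \<le> s" for s
    using that by fastforce
  have frozen: "success_count W s = success_count W m" if "m \<le> s" for s
    using that
  proof (induction s rule: dec_induct)
    case (step n)
    then show ?case using no_success[of n] by simp
  qed simp
  obtain T where "\<forall>s\<ge>T. G s \<longrightarrow> W (success_count W m) s"
    using assms(1) unfolding eventually_sequentially by blast
  moreover obtain s where "max T m \<le> s" and "G s"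
    using assms(2) unfolding infinite_nat_iff_unbounded_le by blast
  ultimately have "W (success_count W m) s" by auto
  moreover have "m \<le> s" using \<open>max T m \<le> s\<close> by simp
  ultimately show False using no_success frozen by metis
qed

lemma finite_successes:
  assumes "\<forall>\<^sub>F s in sequentially. \<forall>N\<ge>N0. \<not> W N s"
  shows "finite {s. W (success_count W s) s}"
proof (rule ccontr)
  assume infinite: "infinite {s. W (success_count W s) s}"
  obtain T where T: "\<forall>s\<ge>T. \<forall>N\<ge>N0. \<not> W N s"
    using assms unfolding eventually_sequentially by blast
  obtain s0 where "N0 \<le> success_count W s0"
    using success_count_unbounded[where W = W, OF infinite] by blast
  moreover obtain s where "max s0 T \<le> s" and "W (success_count W s) s"
    using infinite unfolding infinite_nat_iff_unbounded_le by blast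
  ultimately show False
    using T success_count_mono[of s0 s W] by auto
qed

locale Sigma2_separated =
  fixes K :: "str set" and sep :: "str \<Rightarrow> str \<Rightarrow> form"
  assumes countable_K: "countable K"
    and sep: "\<And>A B. A \<in> K \<Longrightarrow> B \<in> K \<Longrightarrow> A \<noteq> B \<Longrightarrow>
      SigmaInf 2 (sep A B) \<and> sentence (sep A B) \<and> models A (sep A B) \<and> \<not> models B (sep A B)"
begin

definition beats :: "str \<Rightarrow> nat \<Rightarrow> str \<Rightarrow> str \<Rightarrow> bool" where
  "beats D s A B \<longleftrightarrow> level D s (sep A B) < level D s (sep B A)"

lemma eventually_beats:
  assumes "A \<in> K" and "B \<in> K" and "A \<noteq> B" and "iso A S"
  shows "\<forall>\<^sub>F s in sequentially. beats (trunc S s) s A B"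
proof -
  have AB: "SigmaInf 2 (sep A B)" "models S (sep A B)"
    using sep[OF assms(1-3)] models_iso[OF assms(4)] by auto
  have BA: "SigmaInf 2 (sep B A)" "\<not> models S (sep B A)"
    using sep[OF assms(2,1)] assms(3) models_iso[OF assms(4)] by auto
  obtain L where L: "\<forall>s. level (trunc S s) s (sep A B) \<le> L"
    using level_bounded_if_models[OF AB] by blast
  show ?thesis
    using eventually_less_level_if_not_models[OF BA, of L] unfolding beats_def
    by (rule eventually_mono) (use L in \<open>meson le_less_trans\<close>)
qed

text \<open>
  Since N grows with every win, a false candidate eventually has its true rival among the first N
  and stops winning, while the true candidate beats any fixed finite set of rivals eventually.
\<close>

definition wins :: "(nat \<Rightarrow> str) \<Rightarrow> str \<Rightarrow> nat \<Rightarrow> nat \<Rightarrow> bool" where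
  "wins D A N s \<longleftrightarrow> fst (prod_decode s) = to_nat_on K A \<and>
     (\<forall>B\<in>K. to_nat_on K B < N \<longrightarrow> B \<noteq> A \<longrightarrow> beats (D s) s A B)"

definition learner :: "nat \<times> str \<Rightarrow> str option" where
  "learner x = (let s = fst x; A = from_nat_into K (fst (prod_decode s)); D = trunc (snd x) in
     if A \<in> K \<and> wins D A (success_count (wins D A) s) s then Some A else None)"

lemma learner_range: "learner x \<in> insert None (Some ` K)"
  by (auto simp: learner_def Let_def)

lemma learner_restr:
  assumes "A \<in> K"
  shows "learner (restr S s) = Some A \<longleftrightarrow> wins (trunc S) A (success_count (wins (trunc S) A) s) s"
proof -
  have same: "wins (trunc (trunc S s)) B N s' = wins (trunc S) B N s'" if "s' \<le> s" for B N s'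
    using trunc_trunc[OF that] by (simp add: wins_def)
  then have count: "success_count (wins (trunc (trunc S s)) B) s = success_count (wins (trunc S) B) s"
    for B by (intro success_count_cong) simp
  have "from_nat_into K (fst (prod_decode s)) = A" if "wins D A N s" for D N
    using that assms countable_K by (simp add: wins_def)
  then show ?thesis
    using assms same[of s] count by (auto simp: learner_def restr_eq_trunc Let_def)
qed

lemma finite_index_below: "finite {B \<in> K. to_nat_on K B < N}"
proof (rule finite_imageD)
  show "finite (to_nat_on K ` {B \<in> K. to_nat_on K B < N})"
    by (rule finite_subset[of _ "{..<N}"]) auto
  show "inj_on (to_nat_on K) {B \<in> K. to_nat_on K B < N}"
    using inj_on_to_nat_on[OF countable_K] by (rule inj_on_subset) auto
qed

lemma learner_infinite_on_true:
  assumes "k \<in> K" and "iso k S"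
  shows "infinite {s. learner (restr S s) = Some k}"
proof -
  let ?W = "wins (trunc S) k"
  have "\<forall>\<^sub>F s in sequentially. fst (prod_decode s) = to_nat_on K k \<longrightarrow> ?W N s" for N
  proof -
    let ?F = "{B \<in> K. to_nat_on K B < N} - {k}"
    have "\<forall>\<^sub>F s in sequentially. \<forall>B\<in>?F. beats (trunc S s) s k B"
      using finite_index_below assms by (auto intro!: eventually_ball_finite eventually_beats)
    then show ?thesis
      by (rule eventually_mono) (auto simp: wins_def)
  qed
  moreover have "infinite {s. fst (prod_decode s) = to_nat_on K k}"
    unfolding infinite_nat_iff_unbounded_le
    by (auto intro!: exI[of _ "prod_encode (to_nat_on K k, _)"] le_prod_encode_2)
  ultimately have "infinite {s. ?W (success_count ?W s) s}"
    by (rule infinite_successes)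
  then show ?thesis
    using learner_restr[OF assms(1)] by simp
qed

lemma learner_finite_on_false:
  assumes "A \<in> K" and "k \<in> K" and "A \<noteq> k" and "iso k S"
  shows "finite {s. learner (restr S s) = Some A}"
proof -
  let ?W = "wins (trunc S) A"
  have "\<forall>\<^sub>F s in sequentially. \<not> beats (trunc S s) s A k"
    using eventually_beats[OF assms(2,1) assms(3)[symmetric] assms(4)]
    by (rule eventually_mono) (auto simp: beats_def)
  then have "\<forall>\<^sub>F s in sequentially. \<forall>N\<ge>Suc (to_nat_on K k). \<not> ?W N s"
    by (rule eventually_mono) (use assms(2,3) in \<open>force simp: wins_def Suc_le_eq\<close>)
  then have "finite {s. ?W (success_count ?W s) s}"
    by (rule finite_successes)
  then show ?thesis
    using learner_restr[OF assms(1)] by simp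
qed

end

lemma PL_learnable_if_Sigma2_antichain:
  assumes family: "family sig K" and antichain: "Sigma2_antichain K"
  shows "PL_learnable sig K"
proof -
  define sep where
    "sep A B = (SOME \<phi>. SigmaInf 2 \<phi> \<and> sentence \<phi> \<and> models A \<phi> \<and> \<not> models B \<phi>)" for A B
  interpret Sigma2_separated K sep
  proof
    show "countable K" using family by (simp add: family_def)
    fix A B
    assume "A \<in> K" "B \<in> K" "A \<noteq> B"
    then have "\<exists>\<phi>. SigmaInf 2 \<phi> \<and> sentence \<phi> \<and> models A \<phi> \<and> \<not> models B \<phi>"
      using antichain unfolding Sigma2_antichain_def by blast
    then show "SigmaInf 2 (sep A B) \<and> sentence (sep A B) \<and> models A (sep A B) \<and> \<not> models B (sep A B)"
      unfolding sep_def by (rule someI_ex)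
  qed
  have "infinite {s. learner (restr S s) = Some A} \<longleftrightarrow> iso A S"
    if S: "S \<in> LD sig K" and A: "A \<in> K" for S A
  proof -
    obtain k where k: "k \<in> K" "iso k S"
      using S by (auto simp: LD_def)
    show ?thesis
    proof (cases "A = k")
      case True
      then show ?thesis using learner_infinite_on_true k by simp
    next
      case False
      have "\<not> iso A S"
        using False family k A iso_trans[OF _ iso_sym[OF k(2)]] by (auto simp: family_def)
      then show ?thesis using learner_finite_on_false[OF A k(1) False k(2)] by simp
    qed
  qed
  then show ?thesis
    unfolding PL_learnable_def using learner_range by blast
qed

section \<open>Universal types and finite diagrams\<close>

instance qf :: countable
  by countable_datatype

lemma finite_fv_qf: "finite (fv_qf q)"
  by (induction q) auto

definition qf_holds :: "str \<Rightarrow> nat list \<Rightarrow> qf \<Rightarrow> bool" where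
  "qf_holds S as q \<longleftrightarrow> (\<forall>w. (\<forall>i<length as. w i = as ! i) \<longrightarrow> sat_qf S w q)"

definition vars_from :: "nat \<Rightarrow> qf \<Rightarrow> nat list" where
  "vars_from n q = filter (\<lambda>x. n \<le> x) (sorted_list_of_set (fv_qf q))"

lemma set_vars_from: "set (vars_from n q) = {x \<in> fv_qf q. n \<le> x}"
  by (auto simp: vars_from_def finite_fv_qf)

lemma all_agree_off_vars_from:
  "(\<forall>w. (\<forall>x. x \<notin> set (vars_from n q) \<longrightarrow> w x = v x) \<longrightarrow> sat_qf S w q) \<longleftrightarrow>
   (\<forall>w. (\<forall>x<n. w x = v x) \<longrightarrow> sat_qf S w q)"
proof
  assume all: "\<forall>w. (\<forall>x. x \<notin> set (vars_from n q) \<longrightarrow> w x = v x) \<longrightarrow> sat_qf S w q"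
  show "\<forall>w. (\<forall>x<n. w x = v x) \<longrightarrow> sat_qf S w q"
  proof (intro allI impI)
    fix w
    assume "\<forall>x<n. w x = v x"
    then have "\<forall>x\<in>fv (QF q). (\<lambda>x. if x \<in> set (vars_from n q) then w x else v x) x = w x"
      by (auto simp: set_vars_from)
    moreover have "sat_qf S (\<lambda>x. if x \<in> set (vars_from n q) then w x else v x) q"
      using all by simp
    ultimately show "sat_qf S w q"
      using sat_fv_cong[of "QF q" "\<lambda>x. if x \<in> set (vars_from n q) then w x else v x" w S] by simp
  qed
qed (auto simp: set_vars_from)

text \<open>
  The existential closure of the universal type of \<open>as\<close> in A: the conjunction of \<open>\<forall>y. q(x, y)\<close>
  over all quantifier-free q with \<open>A \<Turnstile> \<forall>y. q(as, y)\<close>, enumerated through \<open>from_nat\<close>.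
\<close>

definition Pi1_type :: "str \<Rightarrow> nat list \<Rightarrow> form" where
  "Pi1_type A as = BigOr {0} (\<lambda>_. [0..<length as])
     (\<lambda>_. BigAnd {j. qf_holds A as (from_nat j)} (\<lambda>j. vars_from (length as) (from_nat j))
       (\<lambda>j. QF (from_nat j)))"

lemma sentence_Pi1_type: "sentence (Pi1_type A as)"
  by (auto simp: sentence_def Pi1_type_def set_vars_from)

lemma SigmaInf_2_Pi1_type: "SigmaInf 2 (Pi1_type A as)"
proof -
  have "PiInf 1 (BigAnd {j. qf_holds A as (from_nat j)} (\<lambda>j. vars_from (length as) (from_nat j))
          (\<lambda>j. QF (from_nat j)))"
    by (rule piS) (auto intro: sig0)
  then show ?thesis
    unfolding Pi1_type_def by (intro sigS) (auto intro!: exI[of _ "1::nat"])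
qed

lemma models_Pi1_type_iff:
  "models B (Pi1_type A as) \<longleftrightarrow> (\<exists>bs. length bs = length as \<and> (\<forall>q. qf_holds A as q \<longrightarrow> qf_holds B bs q))"
proof -
  let ?n = "length as"
  have "models B (Pi1_type A as) \<longleftrightarrow>
        (\<exists>w. (\<forall>x. ?n \<le> x \<longrightarrow> w x = 0) \<and>
             (\<forall>j. qf_holds A as (from_nat j) \<longrightarrow> qf_holds B (map w [0..<?n]) (from_nat j)))"
    by (simp add: models_def Pi1_type_def all_agree_off_vars_from not_less qf_holds_def)
  also have "\<dots> \<longleftrightarrow>
        (\<exists>w. (\<forall>x. ?n \<le> x \<longrightarrow> w x = 0) \<and> (\<forall>q. qf_holds A as q \<longrightarrow> qf_holds B (map w [0..<?n]) q))"
    by (metis from_nat_to_nat)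
  also have "\<dots> \<longleftrightarrow> (\<exists>bs. length bs = ?n \<and> (\<forall>q. qf_holds A as q \<longrightarrow> qf_holds B bs q))"
  proof
    assume "\<exists>bs. length bs = ?n \<and> (\<forall>q. qf_holds A as q \<longrightarrow> qf_holds B bs q)"
    then obtain bs where "length bs = ?n" and "\<forall>q. qf_holds A as q \<longrightarrow> qf_holds B bs q"
      by blast
    moreover have "map (\<lambda>x. if x < ?n then bs ! x else 0) [0..<?n] = bs"
      using \<open>length bs = ?n\<close> by (intro nth_equalityI) auto
    ultimately show "\<exists>w. (\<forall>x. ?n \<le> x \<longrightarrow> w x = 0) \<and> (\<forall>q. qf_holds A as q \<longrightarrow> qf_holds B (map w [0..<?n]) q)"
      by (intro exI[of _ "\<lambda>x. if x < ?n then bs ! x else 0"]) auto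
  next
    assume "\<exists>w. (\<forall>x. ?n \<le> x \<longrightarrow> w x = 0) \<and> (\<forall>q. qf_holds A as q \<longrightarrow> qf_holds B (map w [0..<?n]) q)"
    then obtain w where "\<forall>q. qf_holds A as q \<longrightarrow> qf_holds B (map w [0..<?n]) q"
      by blast
    then show "\<exists>bs. length bs = ?n \<and> (\<forall>q. qf_holds A as q \<longrightarrow> qf_holds B bs q)"
      by (intro exI[of _ "map w [0..<?n]"]) simp
  qed
  finally show ?thesis .
qed

lemma models_Pi1_type_self: "models A (Pi1_type A as)"
  by (auto simp: models_Pi1_type_iff)

definition lit :: "bool \<Rightarrow> qf \<Rightarrow> qf" where
  "lit b q = (if b then q else QNeg q)"

lemma sat_lit: "sat_qf S w (lit b q) \<longleftrightarrow> (sat_qf S w q \<longleftrightarrow> b)"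
  by (simp add: lit_def)

fun conj_list :: "qf list \<Rightarrow> qf" where
  "conj_list [] = QEq 0 0"
| "conj_list (q # qs) = QAnd q (conj_list qs)"

lemma sat_conj_list: "sat_qf S w (conj_list qs) \<longleftrightarrow> (\<forall>q\<in>set qs. sat_qf S w q)"
  by (induction qs) auto

definition diagram :: "nat list \<Rightarrow> str \<Rightarrow> nat \<Rightarrow> qf" where
  "diagram sig C N = conj_list
     ([lit (C r xs) (QAtom r xs). r \<leftarrow> [0..<length sig], xs \<leftarrow> List.n_lists (sig ! r) [0..<N]] @
      [QNeg (QEq a b). a \<leftarrow> [0..<N], b \<leftarrow> [0..<N], a \<noteq> b])"

lemma sat_diagram:
  assumes "wf_str sig C" and "wf_str sig S"
  shows "sat_qf S w (diagram sig C N) \<longleftrightarrow>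
    (\<forall>r xs. set xs \<subseteq> {..<N} \<longrightarrow> S r (map w xs) = C r xs) \<and> inj_on w {..<N}"
proof -
  have "sat_qf S w (diagram sig C N) \<longleftrightarrow>
    (\<forall>r<length sig. \<forall>xs. length xs = sig ! r \<and> set xs \<subseteq> {..<N} \<longrightarrow> sat_qf S w (lit (C r xs) (QAtom r xs))) \<and>
    (\<forall>a<N. \<forall>b<N. a \<noteq> b \<longrightarrow> sat_qf S w (QNeg (QEq a b)))"
    unfolding diagram_def sat_conj_list set_append ball_Un
    by (simp add: set_n_lists atLeast0LessThan) blast
  also have "\<dots> \<longleftrightarrow>
    (\<forall>r<length sig. \<forall>xs. length xs = sig ! r \<and> set xs \<subseteq> {..<N} \<longrightarrow> S r (map w xs) = C r xs) \<and>
    (\<forall>a<N. \<forall>b<N. a \<noteq> b \<longrightarrow> w a \<noteq> w b)"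
    by (simp add: sat_lit)
  also have "\<dots> \<longleftrightarrow> (\<forall>r xs. set xs \<subseteq> {..<N} \<longrightarrow> S r (map w xs) = C r xs) \<and> inj_on w {..<N}"
  proof (intro conj_cong)
    show "(\<forall>a<N. \<forall>b<N. a \<noteq> b \<longrightarrow> w a \<noteq> w b) \<longleftrightarrow> inj_on w {..<N}"
      by (auto simp: inj_on_def)
    have "S r (map w xs) = C r xs" if "\<not> (r < length sig \<and> length xs = sig ! r)" for r xs
      using assms that unfolding wf_str_def by (metis length_map)
    then show "(\<forall>r<length sig. \<forall>xs. length xs = sig ! r \<and> set xs \<subseteq> {..<N} \<longrightarrow> S r (map w xs) = C r xs)
        \<longleftrightarrow> (\<forall>r xs. set xs \<subseteq> {..<N} \<longrightarrow> S r (map w xs) = C r xs)"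
      by blast
  qed
  finally show ?thesis .
qed

lemma bij_extension:
  fixes f :: "nat \<Rightarrow> nat"
  assumes "inj_on f {..<n}"
  obtains h where "bij h" and "\<forall>x<n. h x = f x"
proof -
  let ?X = "{..<n}" and ?Y = "f ` {..<n}"
  have "infinite (- ?X)" and "infinite (- ?Y)"
    by (simp_all add: Compl_eq_Diff_UNIV Diff_infinite_finite infinite_UNIV_nat)
  then have "bij_betw (from_nat_into (- ?X)) UNIV (- ?X)" and "bij_betw (from_nat_into (- ?Y)) UNIV (- ?Y)"
    by (simp_all add: bij_betw_from_nat_into)
  then have p: "bij_betw (from_nat_into (- ?Y) \<circ> inv_into UNIV (from_nat_into (- ?X))) (- ?X) (- ?Y)"
    by (blast intro: bij_betw_trans bij_betw_inv_into)
  define h where "h x = (if x < n then f x else (from_nat_into (- ?Y) \<circ> inv_into UNIV (from_nat_into (- ?X))) x)" for x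
  have "bij_betw h ?X ?Y"
    using assms by (auto simp: h_def intro: bij_betw_cong[THEN iffD2, OF _ inj_on_imp_bij_betw])
  moreover have "bij_betw h (- ?X) (- ?Y)"
    using p by (rule bij_betw_cong[THEN iffD1, rotated]) (simp add: h_def)
  ultimately have "bij_betw h (?X \<union> - ?X) (?Y \<union> - ?Y)"
    by (rule bij_betw_combine) simp
  then have "bij h"
    unfolding Compl_partition .
  then show thesis using that by (simp add: h_def)
qed

section \<open>A copy of A on which a learner guesses B\<close>

lemma distinct_if_qf_holds_transfer:
  assumes "distinct as" and "length bs = length as" and "\<And>q. qf_holds A as q \<Longrightarrow> qf_holds B bs q"
  shows "distinct bs"
  unfolding distinct_conv_nth
proof (intro allI impI)
  fix a b
  assume "a < length bs" "b < length bs" "a \<noteq> b"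
  then have "qf_holds A as (QNeg (QEq a b))"
    using assms(1,2) by (simp add: qf_holds_def nth_eq_iff_index_eq)
  then have "qf_holds B bs (QNeg (QEq a b))"
    by (rule assms(3))
  then show "bs ! a \<noteq> bs ! b"
    using \<open>a < length bs\<close> \<open>b < length bs\<close> unfolding qf_holds_def
    by (metis (no_types, lifting) sat_qf.simps(2,3))
qed

lemma embed_finite_part:
  assumes "wf_str sig A" and "wf_str sig B"
    and transfer: "\<And>q. qf_holds A as q \<Longrightarrow> qf_holds B bs q"
    and "bij h" and h: "\<forall>i<length bs. h i = bs ! i"
  obtains w where "\<forall>i<length as. w i = as ! i" and "inj_on w {..<N}"
    and "\<And>r xs. set xs \<subseteq> {..<N} \<Longrightarrow> A r (map w xs) = relabel h B r xs"
proof -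
  let ?C = "relabel h B"
  have wf_C: "wf_str sig ?C"
    using assms(2) by (rule wf_str_relabel)
  have "sat_qf B h (diagram sig ?C N)"
    unfolding sat_diagram[OF wf_C assms(2)]
    using \<open>bij h\<close> by (simp add: relabel_def) (meson bij_is_inj inj_on_subset subset_UNIV)
  then have "\<not> qf_holds B bs (QNeg (diagram sig ?C N))"
    using h by (auto simp: qf_holds_def)
  then have "\<not> qf_holds A as (QNeg (diagram sig ?C N))"
    using transfer by blast
  then obtain w where "\<forall>i<length as. w i = as ! i" and "sat_qf A w (diagram sig ?C N)"
    by (auto simp: qf_holds_def)
  with that show thesis
    by (simp add: sat_diagram[OF wf_C assms(1)])
qed

definition forces_guess :: "(nat \<times> str \<Rightarrow> str option) \<Rightarrow> str \<Rightarrow> str \<Rightarrow> nat \<Rightarrow> nat list \<Rightarrow> bool" where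
  "forces_guess M A B n \<beta> \<longleftrightarrow> (\<exists>t. n \<le> t \<and> t < length \<beta> \<and>
     (\<forall>g. (\<forall>i<length \<beta>. g i = \<beta> ! i) \<longrightarrow> M (restr (relabel g A) t) = Some B))"

lemma list_extension:
  assumes "\<forall>i<length as. w i = as ! i" and "length as \<le> N" and "inj_on w {..<N}"
  obtains \<beta> where "prefix as \<beta>" and "distinct \<beta>" and "k \<in> set \<beta>" and "N \<le> length \<beta>"
    and "\<forall>i<N. \<beta> ! i = w i"
proof
  let ?\<beta> = "map w [0..<N] @ (if k \<in> w ` {..<N} then [] else [k])"
  have "map w [0..<length as] = as"
    using assms(1) by (intro nth_equalityI) auto
  moreover have "[0..<N] = [0..<length as] @ [length as..<N]"
    using assms(2) upt_add_eq_append[of 0 "length as" "N - length as"] by simp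
  ultimately show "prefix as ?\<beta>"
    by (simp add: prefix_def)
  have "distinct (map w [0..<N])"
    using assms(3) by (simp add: distinct_map atLeast0LessThan)
  then show "distinct ?\<beta>"
    by (auto simp: atLeast0LessThan)
  show "k \<in> set ?\<beta>"
    by (auto simp: atLeast0LessThan)
qed (auto simp: nth_append)

lemma guess_extension:
  assumes wf: "wf_str sig A" "wf_str sig B"
    and learns_B: "\<And>C. wf_str sig C \<Longrightarrow> iso B C \<Longrightarrow> infinite {t. M (restr C t) = Some B}"
    and "distinct as" and bs: "length bs = length as"
    and transfer: "\<And>q. qf_holds A as q \<Longrightarrow> qf_holds B bs q"
  shows "\<exists>\<beta>. prefix as \<beta> \<and> distinct \<beta> \<and> k \<in> set \<beta> \<and> forces_guess M A B (length as) \<beta>"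
proof -
  have "inj_on (\<lambda>i. bs ! i) {..<length bs}"
    using distinct_if_qf_holds_transfer[OF \<open>distinct as\<close> bs transfer]
    by (simp add: inj_on_def nth_eq_iff_index_eq)
  then obtain h where "bij h" and h: "\<forall>i<length bs. h i = bs ! i"
    by (rule bij_extension) auto
  let ?C = "relabel h B"
  have "wf_str sig ?C" and "iso B ?C"
    using wf(2) \<open>bij h\<close> by (simp_all add: wf_str_relabel iso_sym iso_relabel)
  then obtain t where "length as \<le> t" and guess: "M (restr ?C t) = Some B"
    using learns_B unfolding infinite_nat_iff_unbounded_le by blast
  obtain w where w_as: "\<forall>i<length as. w i = as ! i" and "inj_on w {..<Suc t}"
    and w_C: "\<And>r xs. set xs \<subseteq> {..<Suc t} \<Longrightarrow> A r (map w xs) = ?C r xs"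
    using embed_finite_part[where N = "Suc t", OF wf transfer \<open>bij h\<close> h] by blast
  then obtain \<beta> where \<beta>: "prefix as \<beta>" "distinct \<beta>" "k \<in> set \<beta>" "Suc t \<le> length \<beta>"
    and \<beta>_w: "\<forall>i<Suc t. \<beta> ! i = w i"
    using \<open>length as \<le> t\<close> by (elim list_extension) auto
  have "M (restr (relabel g A) t) = Some B" if g: "\<forall>i<length \<beta>. g i = \<beta> ! i" for g
  proof -
    have "relabel g A r xs = ?C r xs" if "set xs \<subseteq> {0..t}" for r xs
    proof -
      have "map g xs = map w xs"
        using that g \<beta>_w \<beta>(4) by (auto intro: map_cong)
      then have "relabel g A r xs = A r (map w xs)"
        by (simp only: relabel_def)
      also have "\<dots> = ?C r xs"
        using that by (intro w_C) auto
      finally show ?thesis .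
    qed
    then have "restr (relabel g A) t = restr ?C t"
      by (rule restr_cong)
    with guess show ?thesis by simp
  qed
  with \<beta> \<open>length as \<le> t\<close> show ?thesis
    unfolding forces_guess_def by (intro exI[of _ \<beta>]) auto
qed

lemma prefix_nth: "prefix xs ys \<Longrightarrow> i < length xs \<Longrightarrow> ys ! i = xs ! i"
  by (auto simp: prefix_def nth_append)

context
  fixes xs :: "nat \<Rightarrow> nat list"
  assumes prefix_Suc: "\<And>k. prefix (xs k) (xs (Suc k))"
    and distinct_xs: "\<And>k. distinct (xs k)"
    and covers: "\<And>k. k \<in> set (xs (Suc k))"
begin

lemma prefix_chain: "k \<le> k' \<Longrightarrow> prefix (xs k) (xs k')"
  by (induction k' rule: dec_induct) (auto intro: prefix_order.trans prefix_Suc)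

lemma length_chain_ge: "k \<le> length (xs k)"
proof -
  have "{..<k} \<subseteq> set (xs k)"
  proof
    fix j
    assume "j \<in> {..<k}"
    then have "set (xs (Suc j)) \<subseteq> set (xs k)"
      by (intro set_mono_prefix prefix_chain) simp
    with covers show "j \<in> set (xs k)" by blast
  qed
  then have "card {..<k} \<le> card (set (xs k))"
    by (intro card_mono) auto
  then show ?thesis
    by (simp add: distinct_card[OF distinct_xs])
qed

lemma chain_nth_eq:
  assumes "i < length (xs k)"
  shows "xs (Suc i) ! i = xs k ! i"
proof -
  have "xs (max k (Suc i)) ! i = xs k ! i"
    using assms by (intro prefix_nth prefix_chain) auto
  moreover have "xs (max k (Suc i)) ! i = xs (Suc i) ! i"
    using length_chain_ge[of "Suc i"] by (intro prefix_nth prefix_chain) auto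
  ultimately show ?thesis by simp
qed

lemma bij_chain_limit: "bij (\<lambda>i. xs (Suc i) ! i)"
proof (rule bijI)
  show "inj (\<lambda>i. xs (Suc i) ! i)"
  proof (rule injI)
    fix i j
    assume eq: "xs (Suc i) ! i = xs (Suc j) ! j"
    let ?K = "Suc (max i j)"
    have "i < length (xs ?K)" and "j < length (xs ?K)"
      using length_chain_ge[of ?K] by auto
    moreover from this eq have "xs ?K ! i = xs ?K ! j"
      using chain_nth_eq by simp
    ultimately show "i = j"
      using nth_eq_iff_index_eq[OF distinct_xs] by blast
  qed
  show "surj (\<lambda>i. xs (Suc i) ! i)"
  proof (rule surjI)
    fix y
    obtain i where i: "i < length (xs (Suc y))" and "xs (Suc y) ! i = y"
      using covers[of y] by (auto simp: in_set_conv_nth)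
    then have "xs (Suc i) ! i = y"
      using chain_nth_eq[OF i] by simp
    then have "y \<in> range (\<lambda>i. xs (Suc i) ! i)"
      by (rule range_eqI[OF sym])
    then show "xs (Suc (inv (\<lambda>i. xs (Suc i) ! i) y)) ! inv (\<lambda>i. xs (Suc i) ! i) y = y"
      by (rule f_inv_into_f)
  qed
qed

end

lemma relabelling_with_infinitely_many_guesses:
  assumes step: "\<And>as k. distinct as \<Longrightarrow>
    \<exists>\<beta>. prefix as \<beta> \<and> distinct \<beta> \<and> k \<in> set \<beta> \<and> forces_guess M A B (length as) \<beta>"
  obtains g where "bij g" and "infinite {t. M (restr (relabel g A) t) = Some B}"
proof -
  have "\<exists>xs. \<forall>k. distinct (xs k) \<and> prefix (xs k) (xs (Suc k)) \<and> k \<in> set (xs (Suc k)) \<and>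
                      forces_guess M A B (length (xs k)) (xs (Suc k))"
  proof (rule dependent_nat_choice)
    show "\<exists>as :: nat list. distinct as"
      by (rule exI[of _ "[]"]) simp
  next
    fix as :: "nat list" and k
    assume "distinct as"
    then show "\<exists>\<beta>. distinct \<beta> \<and> prefix as \<beta> \<and> k \<in> set \<beta> \<and> forces_guess M A B (length as) \<beta>"
      using step by blast
  qed
  then obtain xs where xs: "\<And>k. distinct (xs k) \<and> prefix (xs k) (xs (Suc k)) \<and> k \<in> set (xs (Suc k)) \<and>
                            forces_guess M A B (length (xs k)) (xs (Suc k))"
    by blast
  define g where "g i = xs (Suc i) ! i" for i
  have "bij g"
    unfolding g_def using xs by (intro bij_chain_limit) auto
  moreover have "\<exists>t\<ge>m. M (restr (relabel g A) t) = Some B" for m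
  proof -
    obtain t where "length (xs m) \<le> t"
      and t: "\<forall>g'. (\<forall>i<length (xs (Suc m)). g' i = xs (Suc m) ! i) \<longrightarrow> M (restr (relabel g' A) t) = Some B"
      using xs[of m] unfolding forces_guess_def by blast
    moreover have "m \<le> length (xs m)"
      using xs by (intro length_chain_ge) auto
    moreover have "\<forall>i<length (xs (Suc m)). g i = xs (Suc m) ! i"
      unfolding g_def using xs by (intro allI impI chain_nth_eq) auto
    ultimately show ?thesis
      by (intro exI[of _ t]) simp
  qed
  then have "infinite {t. M (restr (relabel g A) t) = Some B}"
    unfolding infinite_nat_iff_unbounded_le by blast
  ultimately show thesis
    by (rule that)
qed

lemma Sigma2_separator_if_PL_learnable:
  assumes family: "family sig K" and "PL_learnable sig K"
    and AB: "A \<in> K" "B \<in> K" "A \<noteq> B"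
  shows "\<exists>\<phi>. sentence \<phi> \<and> SigmaInf 2 \<phi> \<and> models A \<phi> \<and> \<not> models B \<phi>"
proof (rule ccontr)
  assume "\<not> ?thesis"
  then have Sigma2_transfer: "\<And>\<phi>. sentence \<phi> \<Longrightarrow> SigmaInf 2 \<phi> \<Longrightarrow> models A \<phi> \<Longrightarrow> models B \<phi>"
    by blast
  obtain M where M: "\<forall>S\<in>LD sig K. \<forall>A\<in>K. infinite {n. M (restr S n) = Some A} \<longleftrightarrow> iso A S"
    using \<open>PL_learnable sig K\<close> unfolding PL_learnable_def by blast
  have wf: "wf_str sig A" "wf_str sig B"
    using family AB unfolding family_def by auto
  have learns_B: "infinite {t. M (restr C t) = Some B}" if "wf_str sig C" and "iso B C" for C
    using M AB that by (auto simp: LD_def)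
  have "\<exists>\<beta>. prefix as \<beta> \<and> distinct \<beta> \<and> k \<in> set \<beta> \<and> forces_guess M A B (length as) \<beta>"
    if "distinct as" for as k
  proof -
    have "models B (Pi1_type A as)"
      by (rule Sigma2_transfer[OF sentence_Pi1_type SigmaInf_2_Pi1_type models_Pi1_type_self])
    then obtain bs where bs: "length bs = length as" and transfer: "\<And>q. qf_holds A as q \<Longrightarrow> qf_holds B bs q"
      by (auto simp: models_Pi1_type_iff)
    show ?thesis
      by (rule guess_extension[OF wf learns_B \<open>distinct as\<close> bs transfer])
  qed
  then obtain g where "bij g" and guesses: "infinite {t. M (restr (relabel g A) t) = Some B}"
    by (rule relabelling_with_infinitely_many_guesses)
  have "iso A (relabel g A)"
    using \<open>bij g\<close> by (rule iso_sym[OF iso_relabel])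
  moreover have "relabel g A \<in> LD sig K"
    unfolding LD_def using AB wf calculation by (auto intro: wf_str_relabel)
  moreover have "iso B (relabel g A)"
    using M guesses AB(2) calculation(2) by blast
  ultimately have "iso A B"
    using iso_trans iso_sym by metis
  with family AB show False
    unfolding family_def by blast
qed

theorem mainTheorem14:
  fixes sig :: "nat list" and K :: "str set"
  assumes "family sig K"
  shows "PL_learnable sig K \<longleftrightarrow> Sigma2_antichain K"
proof
  assume learnable: "PL_learnable sig K"
  show "Sigma2_antichain K"
    unfolding Sigma2_antichain_def
  proof (intro ballI impI)
    fix A B
    assume "A \<in> K" "B \<in> K" "A \<noteq> B"
    then obtain \<phi> \<psi> where "sentence \<phi> \<and> SigmaInf 2 \<phi> \<and> models A \<phi> \<and> \<not> models B \<phi>"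
      and "sentence \<psi> \<and> SigmaInf 2 \<psi> \<and> models B \<psi> \<and> \<not> models A \<psi>"
      using Sigma2_separator_if_PL_learnable[OF assms learnable] by (metis (no_types))
    then show "\<exists>\<phi> \<psi>. sentence \<phi> \<and> SigmaInf 2 \<phi> \<and> sentence \<psi> \<and> SigmaInf 2 \<psi> \<and>
        models A \<phi> \<and> \<not> models B \<phi> \<and> models B \<psi> \<and> \<not> models A \<psi>"
      by blast
  qed
next
  assume "Sigma2_antichain K"
  then show "PL_learnable sig K"
    by (rule PL_learnable_if_Sigma2_antichain[OF assms])
qed

end
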